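(* The variety $Z_{Horn}$ is the vanishing locus (in $W$) of the polynomial $s(X)=\det(H\circ X)$, where $\circ$ denotes the Hadamard (entrywise) product.
   Context: $H$ is the Horn matrix \[H=\begin{pmatrix} 1 & -1 &1& 1& -1 \\ -1 & 1& -1 &1& 1\\ 1 & -1 & 1 & -1 & 1\\ 1 & 1& -1&1& -1\\ -1&1&1&-1&1\end{pmatrix}.\] $W$ is the space of $5\times 5$ matrices of the form \[X=\begin{pmatrix} y_{11}& 0&0& y_{41}& y_{51} \\ y_{12} & y_{22}& 0 &0& y_{52}\\ y_{13 }& y_{23}& y_{33} & 0& 0\\ 0 & y_{24}& y_{34}&y_{44}& 0\\ 0&0&y_{35}&y_{45}& y_{55}\end{pmatrix}.\] $Z_{Horn}\subset W$ is the set of all matrices $DB$ where $D$ is a diagonal matrix with positive diagonal entries and \[B = \begin{pmatrix} 1& 0&0& y_4& y_5+1 \\ y_1+1 & 1& 0 &0& y_5\\ y_1 & y_2+1 & 1 & 0& 0\\ 0 & y_2& y_3+1&1& 0\\ 0&0&y_3&y_4+1&1\end{pmatrix}\operatorname{diag}(z_1,\dots,z_5)\] with $y_1,\dots,y_5,z_1,\dots,z_5$ positive reals; it is regarded as a hypersurface (variety) in $W$. *)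

theory Defs
  imports "Jordan_Normal_Form.Determinant"
begin

text \<open>Matrices are 5x5 real matrices of type real mat (Jordan_Normal_Form), indexed
  0-based: entry (i,j) here is entry (i+1,j+1) of the paper.\<close>

definition Horn :: "real mat" where
  "Horn = mat_of_rows_list 5
     [[ 1, -1,  1,  1, -1],
      [-1,  1, -1,  1,  1],
      [ 1, -1,  1, -1,  1],
      [ 1,  1, -1,  1, -1],
      [-1,  1,  1, -1,  1]]"

definition hadamard :: "real mat \<Rightarrow> real mat \<Rightarrow> real mat" where
  "hadamard A B = mat (dim_row A) (dim_col A) (\<lambda>(i,j). A $$ (i,j) * B $$ (i,j))"

text \<open>The linear space W: 5x5 matrices vanishing at the positions
  (1,2),(1,3),(2,3),(2,4),(3,4),(3,5),(4,5),(4,1),(5,1),(5,2).\<close>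
definition inW :: "real mat \<Rightarrow> bool" where
  "inW X \<longleftrightarrow> X \<in> carrier_mat 5 5 \<and>
     (\<forall>i<5. \<forall>j<5. (j + 5 - i) mod 5 \<in> {1,2} \<longrightarrow> X $$ (i,j) = 0)"

definition W :: "real mat set" where
  "W = {X. inW X}"

definition diag5 :: "(nat \<Rightarrow> real) \<Rightarrow> real mat" where
  "diag5 d = mat 5 5 (\<lambda>(i,j). if i = j then d i else 0)"

text \<open>The matrix B(y,z); y k and z k stand for y_{k+1}, z_{k+1}.\<close>
definition Bmat :: "(nat \<Rightarrow> real) \<Rightarrow> (nat \<Rightarrow> real) \<Rightarrow> real mat" where
  "Bmat y z = mat_of_rows_list 5
     [[1,         0,         0,         y 3,       y 4 + 1],
      [y 0 + 1,   1,         0,         0,         y 4],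
      [y 0,       y 1 + 1,   1,         0,         0],
      [0,         y 1,       y 2 + 1,   1,         0],
      [0,         0,         y 2,       y 3 + 1,   1]] * diag5 z"

definition Z_Horn :: "real mat set" where
  "Z_Horn = {diag5 d * Bmat y z | d y z.
               (\<forall>k<5. d k > 0) \<and> (\<forall>k<5. y k > 0) \<and> (\<forall>k<5. z k > 0)}"

inductive_set poly_fun :: "(real mat \<Rightarrow> real) set" where
  const: "(\<lambda>X. c) \<in> poly_fun"
| entry: "i < 5 \<Longrightarrow> j < 5 \<Longrightarrow> (\<lambda>X. X $$ (i,j)) \<in> poly_fun"
| add: "p \<in> poly_fun \<Longrightarrow> q \<in> poly_fun \<Longrightarrow> (\<lambda>X. p X + q X) \<in> poly_fun"
| mult: "p \<in> poly_fun \<Longrightarrow> q \<in> poly_fun \<Longrightarrow> (\<lambda>X. p X * q X) \<in> poly_fun"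

definition zariski_closed :: "real mat set \<Rightarrow> bool" where
  "zariski_closed C \<longleftrightarrow>
     (\<exists>P \<subseteq> poly_fun. C = {X \<in> carrier_mat 5 5. \<forall>p\<in>P. p X = 0})"

definition zariski_closure :: "real mat set \<Rightarrow> real mat set" where
  "zariski_closure S = \<Inter> {C. zariski_closed C \<and> S \<subseteq> C}"

end

theory Submission
  imports Defs
begin

(* Write X in W by its columns (a j, b j, c j), in rows j, j+1, j+2 (mod 5), where Horn has the
   signs +, -, +. Then det (Horn o X) = 0 iff some e <> 0 satisfies
   e j * a j - e (j+1) * b j + e (j+2) * c j = 0 for all j, and on Z_Horn e = 1/d works.
   The converse inclusion rests on the fact that a polynomial curve lying in a Zariski closed set
   for all large t lies in it for every t. If no e k vanishes, X has the shape of a point of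
   Z_Horn except for positivity, which shifting all parameters by t restores. Otherwise some
   F <> 0, supported on the zeros of e, satisfies the equations of the columns on whose three rows
   e vanishes (a column j with e j = 0 <> e (j+1) imposes none), and X deforms polynomially along
   with the kernel vector e + t F, which has fewer zeros; induction on the number of zeros
   concludes. *)

definition cyc_succ :: "nat \<Rightarrow> nat" where
  "cyc_succ j = (j + 1) mod 5"

definition cyc_succ2 :: "nat \<Rightarrow> nat" where
  "cyc_succ2 j = (j + 2) mod 5"

lemma cyc_succ_simps [simp]:
  "cyc_succ 0 = Suc 0" "cyc_succ (Suc 0) = 2" "cyc_succ 2 = 3" "cyc_succ 3 = 4" "cyc_succ 4 = 0"
  "cyc_succ2 0 = 2" "cyc_succ2 (Suc 0) = 3" "cyc_succ2 2 = 4" "cyc_succ2 3 = 0" "cyc_succ2 4 = Suc 0"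
  by (simp_all add: cyc_succ_def cyc_succ2_def)

lemma cyc_succ_less [simp]: "cyc_succ j < 5" "cyc_succ2 j < 5"
  by (simp_all add: cyc_succ_def cyc_succ2_def)

lemma all_less_5: "(\<forall>j<5. P j) \<longleftrightarrow> P 0 \<and> P 1 \<and> P 2 \<and> P 3 \<and> P (4::nat)"
  by (auto simp: less_Suc_eq numeral_eq_Suc)

lemma ex_less_5: "(\<exists>j<5. P j) \<longleftrightarrow> P 0 \<or> P 1 \<or> P 2 \<or> P 3 \<or> P (4::nat)"
  by (auto simp: less_Suc_eq numeral_eq_Suc)

lemma sum_less_5: "(\<Sum>i<(5::nat). f i) = f 0 + f 1 + f 2 + f 3 + (f 4 :: 'a::comm_monoid_add)"
  by (simp add: numeral_eq_Suc lessThan_Suc add_ac)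

lemma eq_mat_5I:
  "A \<in> carrier_mat 5 5 \<Longrightarrow> B \<in> carrier_mat 5 5 \<Longrightarrow> \<forall>i<5. \<forall>j<5. A $$ (i, j) = B $$ (i, j) \<Longrightarrow> A = B"
  by (intro eq_matI) auto

definition Wmat :: "(nat \<Rightarrow> real) \<Rightarrow> (nat \<Rightarrow> real) \<Rightarrow> (nat \<Rightarrow> real) \<Rightarrow> real mat" where
  "Wmat a b c = mat 5 5 (\<lambda>(i, j).
     if i = j then a j else if i = cyc_succ j then b j else if i = cyc_succ2 j then c j else 0)"

lemma Wmat_carrier [simp]: "Wmat a b c \<in> carrier_mat 5 5"
  by (simp add: Wmat_def)

lemma Wmat_cong:
  "(\<And>j. j < 5 \<Longrightarrow> a j = a' j \<and> b j = b' j \<and> c j = c' j) \<Longrightarrow> Wmat a b c = Wmat a' b' c'"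
  unfolding Wmat_def by (rule eq_matI) auto

lemma inW_Wmat: "inW (Wmat a b c)"
  unfolding inW_def Wmat_def by (simp only: all_less_5) simp

lemma inW_imp_Wmat:
  "inW X \<Longrightarrow> X = Wmat (\<lambda>j. X $$ (j, j)) (\<lambda>j. X $$ (cyc_succ j, j)) (\<lambda>j. X $$ (cyc_succ2 j, j))"
  unfolding inW_def by (intro eq_mat_5I) (simp_all add: Wmat_def all_less_5)

definition horn_form ::
  "(nat \<Rightarrow> real) \<Rightarrow> (nat \<Rightarrow> real) \<Rightarrow> (nat \<Rightarrow> real) \<Rightarrow> (nat \<Rightarrow> real) \<Rightarrow> nat \<Rightarrow> real"
  where "horn_form a b c e j = e j * a j - e (cyc_succ j) * b j + e (cyc_succ2 j) * c j"

definition horn_kernel ::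
  "(nat \<Rightarrow> real) \<Rightarrow> (nat \<Rightarrow> real) \<Rightarrow> (nat \<Rightarrow> real) \<Rightarrow> (nat \<Rightarrow> real) \<Rightarrow> bool"
  where "horn_kernel a b c e \<longleftrightarrow> (\<forall>j<5. horn_form a b c e j = 0)"

lemma Horn_band:
  "\<forall>j<5. Horn $$ (j, j) = 1 \<and> Horn $$ (cyc_succ j, j) = -1 \<and> Horn $$ (cyc_succ2 j, j) = 1"
  by (simp only: all_less_5) (simp add: Horn_def mat_of_rows_list_def)

lemma Horn_dims [simp]: "dim_row Horn = 5" "dim_col Horn = 5"
  by (simp_all add: Horn_def mat_of_rows_list_def)

lemma hadamard_Horn_carrier [simp]: "hadamard Horn X \<in> carrier_mat 5 5"
  by (simp add: hadamard_def)

lemma sum_hadamard_Horn_Wmat: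
  assumes "j < 5"
  shows "(\<Sum>i<5. e i * hadamard Horn (Wmat a b c) $$ (i, j)) = horn_form a b c e j"
proof -
  have "\<forall>j<5. (\<Sum>i<5. e i * hadamard Horn (Wmat a b c) $$ (i, j)) =
      (\<Sum>i<5. e i * (Horn $$ (i, j) * (if i = j then a j else if i = cyc_succ j then b j
        else if i = cyc_succ2 j then c j else 0)))"
    by (auto simp: hadamard_def Wmat_def intro!: sum.cong)
  then have "\<forall>j<5. (\<Sum>i<5. e i * hadamard Horn (Wmat a b c) $$ (i, j)) = horn_form a b c e j"
    using Horn_band by (simp only: all_less_5 sum_less_5) (simp add: horn_form_def)
  then show ?thesis
    using assms by blast
qed

lemma det_eq_0_iff_left_kernel:
  fixes A :: "'a::field mat"
  assumes A: "A \<in> carrier_mat n n"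
  shows "det A = 0 \<longleftrightarrow> (\<exists>e. (\<exists>i<n. e i \<noteq> 0) \<and> (\<forall>j<n. (\<Sum>i<n. e i * A $$ (i, j)) = 0))"
proof -
  have entry: "(transpose_mat A *\<^sub>v v) $ j = (\<Sum>i<n. v $ i * A $$ (i, j))"
    if "v \<in> carrier_vec n" "j < n" for v j
    using A that by (auto simp: scalar_prod_def lessThan_atLeast0 mult.commute intro!: sum.cong)
  have "det A = 0 \<longleftrightarrow> det (transpose_mat A) = 0"
    using det_transpose[OF A] by simp
  also have "\<dots> \<longleftrightarrow> (\<exists>v. v \<in> carrier_vec n \<and> v \<noteq> 0\<^sub>v n \<and> transpose_mat A *\<^sub>v v = 0\<^sub>v n)"
    by (rule det_0_iff_vec_prod_zero_field) (use A in simp)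
  also have "\<dots> \<longleftrightarrow> (\<exists>e. (\<exists>i<n. e i \<noteq> 0) \<and> (\<forall>j<n. (\<Sum>i<n. e i * A $$ (i, j)) = 0))"
  proof
    assume "\<exists>v. v \<in> carrier_vec n \<and> v \<noteq> 0\<^sub>v n \<and> transpose_mat A *\<^sub>v v = 0\<^sub>v n"
    then obtain v where v: "v \<in> carrier_vec n" "v \<noteq> 0\<^sub>v n" "transpose_mat A *\<^sub>v v = 0\<^sub>v n"
      by blast
    have "\<exists>i<n. v $ i \<noteq> 0"
      using v(1,2) by (auto simp: vec_eq_iff)
    moreover have "(\<Sum>i<n. v $ i * A $$ (i, j)) = 0" if "j < n" for j
      using entry[OF v(1) that] v(3) that by (metis index_zero_vec(1))
    ultimately show "\<exists>e. (\<exists>i<n. e i \<noteq> 0) \<and> (\<forall>j<n. (\<Sum>i<n. e i * A $$ (i, j)) = 0)"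
      by blast
  next
    assume "\<exists>e. (\<exists>i<n. e i \<noteq> 0) \<and> (\<forall>j<n. (\<Sum>i<n. e i * A $$ (i, j)) = 0)"
    then obtain e where e: "\<exists>i<n. e i \<noteq> 0" "\<forall>j<n. (\<Sum>i<n. e i * A $$ (i, j)) = 0"
      by blast
    have "vec n e \<noteq> 0\<^sub>v n"
      using e(1) by (auto simp: vec_eq_iff)
    moreover have "(transpose_mat A *\<^sub>v vec n e) $ j = 0" if "j < n" for j
      using entry[of "vec n e" j] e(2) that by simp
    then have "transpose_mat A *\<^sub>v vec n e = 0\<^sub>v n"
      using A by (intro eq_vecI) auto
    ultimately show "\<exists>v. v \<in> carrier_vec n \<and> v \<noteq> 0\<^sub>v n \<and> transpose_mat A *\<^sub>v v = 0\<^sub>v n"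
      using vec_carrier by blast
  qed
  finally show ?thesis .
qed

lemma det_eq_0_if_zero_col:
  fixes A :: "'a::field mat"
  assumes A: "A \<in> carrier_mat n n" and "j < n" and "\<forall>i<n. A $$ (i, j) = 0"
  shows "det A = 0"
proof -
  have "A *\<^sub>v unit_vec n j = 0\<^sub>v n"
    using assms by (intro eq_vecI) auto
  then show ?thesis
    using assms det_0_iff_vec_prod_zero_field[OF A] unit_vec_carrier unit_vec_nonzero by blast
qed

lemma det_hadamard_Horn_Wmat_eq_0_iff:
  "det (hadamard Horn (Wmat a b c)) = 0 \<longleftrightarrow> (\<exists>e. (\<exists>i<5. e i \<noteq> 0) \<and> horn_kernel a b c e)"
  by (simp add: det_eq_0_iff_left_kernel[of _ 5] sum_hadamard_Horn_Wmat horn_kernel_def)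

lemma poly_fun_sum:
  "finite S \<Longrightarrow> (\<And>s. s \<in> S \<Longrightarrow> f s \<in> poly_fun) \<Longrightarrow> (\<lambda>X. \<Sum>s\<in>S. f s X) \<in> poly_fun"
  by (induction S rule: finite_induct) (simp_all add: poly_fun.const poly_fun.add)

lemma poly_fun_prod:
  "finite S \<Longrightarrow> (\<And>s. s \<in> S \<Longrightarrow> f s \<in> poly_fun) \<Longrightarrow> (\<lambda>X. \<Prod>s\<in>S. f s X) \<in> poly_fun"
  by (induction S rule: finite_induct) (simp_all add: poly_fun.const poly_fun.mult)

lemma poly_fun_det:
  assumes "\<And>X. M X \<in> carrier_mat 5 5"
    and "\<And>i j. i < 5 \<Longrightarrow> j < 5 \<Longrightarrow> (\<lambda>X. M X $$ (i, j)) \<in> poly_fun"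
  shows "(\<lambda>X. det (M X)) \<in> poly_fun"
proof -
  have "(\<lambda>X. \<Sum>p\<in>{p. p permutes {0..<5}}. signof p * (\<Prod>i=0..<5. M X $$ (i, p i))) \<in> poly_fun"
  proof (intro poly_fun_sum poly_fun.mult[OF poly_fun.const] poly_fun_prod)
    show "(\<lambda>X. M X $$ (i, p i)) \<in> poly_fun" if "p \<in> {p. p permutes {0..<5}}" "i \<in> {0..<5}" for p i
      using that permutes_in_image[of p "{0..<5}" i] by (auto intro: assms(2))
  qed (simp_all add: finite_permutations)
  then show ?thesis
    using det_def'[OF assms(1)] by simp
qed

lemma zariski_closed_det_locus: "zariski_closed {X \<in> W. det (hadamard Horn X) = 0}"
proof -
  have det: "(\<lambda>X. det (hadamard Horn X)) \<in> poly_fun"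
  proof (rule poly_fun_det)
    show "(\<lambda>X. hadamard Horn X $$ (i, j)) \<in> poly_fun" if "i < 5" "j < 5" for i j
      using that poly_fun.mult[OF poly_fun.const poly_fun.entry] by (simp add: hadamard_def)
  qed simp
  define P where "P = insert (\<lambda>X. det (hadamard Horn X))
    {(\<lambda>X. X $$ (i, j)) | i j. i < 5 \<and> j < 5 \<and> (j + 5 - i) mod 5 \<in> {1, 2}}"
  have "P \<subseteq> poly_fun"
    unfolding P_def using det poly_fun.entry by auto
  moreover have "{X \<in> W. det (hadamard Horn X) = 0} = {X \<in> carrier_mat 5 5. \<forall>p\<in>P. p X = 0}"
    unfolding P_def W_def inW_def by auto
  ultimately show ?thesis
    unfolding zariski_closed_def by blast
qed

lemma diag5_carrier [simp]: "diag5 d \<in> carrier_mat 5 5"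
  by (simp add: diag5_def)

lemma diag5_mult_index:
  "N \<in> carrier_mat 5 n \<Longrightarrow> i < 5 \<Longrightarrow> j < n \<Longrightarrow> (diag5 d * N) $$ (i, j) = d i * N $$ (i, j)"
  by (simp add: diag5_def scalar_prod_def if_distrib[where f = "\<lambda>x. x * _"] cong: if_cong)

lemma mult_diag5_index:
  "N \<in> carrier_mat n 5 \<Longrightarrow> i < n \<Longrightarrow> j < 5 \<Longrightarrow> (N * diag5 d) $$ (i, j) = N $$ (i, j) * d j"
  by (simp add: diag5_def scalar_prod_def if_distrib[where f = "\<lambda>x. _ * x"] cong: if_cong)

lemma Bmat_eq_Wmat_mult_diag5: "Bmat y z = Wmat (\<lambda>_. 1) (\<lambda>j. y j + 1) y * diag5 z"
  unfolding Bmat_def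
proof (rule arg_cong[where f = "\<lambda>L. L * diag5 z"], rule eq_matI)
  have "\<forall>i<5. \<forall>j<5. mat_of_rows_list 5
     [[1,         0,         0,         y 3,       y 4 + 1],
      [y 0 + 1,   1,         0,         0,         y 4],
      [y 0,       y 1 + 1,   1,         0,         0],
      [0,         y 1,       y 2 + 1,   1,         0],
      [0,         0,         y 2,       y 3 + 1,   1]] $$ (i, j) = Wmat (\<lambda>_. 1) (\<lambda>j. y j + 1) y $$ (i, j)"
    (is "\<forall>i<5. \<forall>j<5. ?L $$ (i, j) = ?W $$ (i, j)")
    by (simp only: all_less_5) (simp add: mat_of_rows_list_def Wmat_def)
  then show "?L $$ (i, j) = ?W $$ (i, j)" if "i < dim_row ?W" "j < dim_col ?W" for i j
    using that by (simp add: Wmat_def)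
qed (simp_all add: mat_of_rows_list_def Wmat_def)

lemma diag5_mult_Bmat_eq_Wmat:
  "diag5 d * Bmat y z = Wmat (\<lambda>j. d j * z j) (\<lambda>j. d (cyc_succ j) * (y j + 1) * z j)
     (\<lambda>j. d (cyc_succ2 j) * y j * z j)"
    (is "_ = ?W")
proof (rule eq_matI)
  fix i j assume "i < dim_row ?W" "j < dim_col ?W"
  then have "i < 5" "j < 5"
    by (simp_all add: Wmat_def)
  moreover have "Wmat (\<lambda>_. 1) (\<lambda>j. y j + 1) y * diag5 z \<in> carrier_mat 5 5"
    using mult_carrier_mat[OF Wmat_carrier diag5_carrier] .
  ultimately have "(diag5 d * Bmat y z) $$ (i, j) = d i * Wmat (\<lambda>_. 1) (\<lambda>j. y j + 1) y $$ (i, j) * z j"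
    unfolding Bmat_eq_Wmat_mult_diag5 by (simp add: diag5_mult_index mult_diag5_index[of _ 5])
  then show "(diag5 d * Bmat y z) $$ (i, j) = ?W $$ (i, j)"
    using \<open>i < 5\<close> \<open>j < 5\<close> by (simp add: Wmat_def)
qed (simp_all add: Bmat_def diag5_def Wmat_def)

lemma Wmat_mem_Z_Horn:
  assumes "\<forall>k<5. d k > 0" "\<forall>k<5. z k > 0" "\<forall>k<5. w k > 0"
  shows "Wmat (\<lambda>j. d j * z j) (\<lambda>j. d (cyc_succ j) * (z j + w j)) (\<lambda>j. d (cyc_succ2 j) * w j)
    \<in> Z_Horn"
proof -
  define y where "y j = w j / z j" for j
  have "Wmat (\<lambda>j. d j * z j) (\<lambda>j. d (cyc_succ j) * (z j + w j)) (\<lambda>j. d (cyc_succ2 j) * w j)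
    = diag5 d * Bmat y z"
    unfolding diag5_mult_Bmat_eq_Wmat
  proof (rule Wmat_cong)
    fix j :: nat assume "j < 5"
    then have "z j \<noteq> 0"
      using assms(2) by fastforce
    then show "d j * z j = d j * z j \<and> d (cyc_succ j) * (z j + w j) = d (cyc_succ j) * (y j + 1) * z j
      \<and> d (cyc_succ2 j) * w j = d (cyc_succ2 j) * y j * z j"
      by (simp add: y_def field_simps)
  qed
  moreover have "\<forall>k<5. y k > 0"
    using assms(2,3) by (simp add: y_def)
  ultimately show ?thesis
    using assms(1,2) unfolding Z_Horn_def by blast
qed

lemma Z_Horn_subset_det_locus: "Z_Horn \<subseteq> {X \<in> W. det (hadamard Horn X) = 0}"
proof
  fix X assume "X \<in> Z_Horn"
  then obtain d y z where X: "X = diag5 d * Bmat y z" and d: "\<forall>k<5. d k > 0"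
    unfolding Z_Horn_def by blast
  have "horn_kernel (\<lambda>j. d j * z j) (\<lambda>j. d (cyc_succ j) * (y j + 1) * z j)
    (\<lambda>j. d (cyc_succ2 j) * y j * z j) (\<lambda>k. 1 / d k)"
    unfolding horn_kernel_def horn_form_def
  proof (intro allI impI)
    fix j :: nat assume "j < 5"
    have "d k \<noteq> 0" if "k < 5" for k
      using d that by fastforce
    then have "d j \<noteq> 0" "d (cyc_succ j) \<noteq> 0" "d (cyc_succ2 j) \<noteq> 0"
      using \<open>j < 5\<close> by simp_all
    then show "1 / d j * (d j * z j) - 1 / d (cyc_succ j) * (d (cyc_succ j) * (y j + 1) * z j)
        + 1 / d (cyc_succ2 j) * (d (cyc_succ2 j) * y j * z j) = 0"
      by (simp add: field_simps)
  qed
  moreover have "\<exists>i<5. 1 / d i \<noteq> 0"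
    using d[rule_format, of 0] by (intro exI[of _ 0]) simp
  ultimately have "det (hadamard Horn X) = 0"
    unfolding X diag5_mult_Bmat_eq_Wmat det_hadamard_Horn_Wmat_eq_0_iff by (intro exI[of _ "\<lambda>k. 1 / d k"]) blast
  then show "X \<in> {X \<in> W. det (hadamard Horn X) = 0}"
    unfolding X diag5_mult_Bmat_eq_Wmat W_def using inW_Wmat by simp
qed

definition is_poly :: "(real \<Rightarrow> real) \<Rightarrow> bool" where
  "is_poly f \<longleftrightarrow> (\<exists>q. \<forall>t. f t = poly q t)"

lemma is_poly_const: "is_poly (\<lambda>t. c)"
  unfolding is_poly_def by (intro exI[of _ "[:c:]"]) simp

lemma is_poly_ident: "is_poly (\<lambda>t. t)"
  unfolding is_poly_def by (intro exI[of _ "[:0, 1:]"]) simp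

lemma is_poly_add: "is_poly f \<Longrightarrow> is_poly g \<Longrightarrow> is_poly (\<lambda>t. f t + g t)"
  unfolding is_poly_def by (metis poly_add)

lemma is_poly_diff: "is_poly f \<Longrightarrow> is_poly g \<Longrightarrow> is_poly (\<lambda>t. f t - g t)"
  unfolding is_poly_def by (metis poly_diff)

lemma is_poly_mult: "is_poly f \<Longrightarrow> is_poly g \<Longrightarrow> is_poly (\<lambda>t. f t * g t)"
  unfolding is_poly_def by (metis poly_mult)

lemmas is_poly_intros = is_poly_const is_poly_ident is_poly_add is_poly_diff is_poly_mult

lemma is_poly_eventually_0_imp_0:
  assumes "is_poly f" "\<forall>\<^sub>F t in at_top. f t = 0"
  shows "f t = 0"
proof -
  obtain q where q: "\<And>t. f t = poly q t"
    using assms(1) unfolding is_poly_def by blast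
  obtain M where M: "\<And>t. t \<ge> M \<Longrightarrow> poly q t = 0"
    using assms(2) unfolding q eventually_at_top_linorder by blast
  have "q = 0"
  proof (rule ccontr)
    assume "q \<noteq> 0"
    then have "finite {t. poly q t = 0}"
      by (rule poly_roots_finite)
    moreover have "{M..} \<subseteq> {t. poly q t = 0}"
      using M by auto
    ultimately show False
      using infinite_Ici finite_subset by blast
  qed
  then show ?thesis
    by (simp add: q)
qed

lemma is_poly_poly_fun_along_curve:
  assumes "p \<in> poly_fun" and "\<And>i j. i < 5 \<Longrightarrow> j < 5 \<Longrightarrow> is_poly (\<lambda>t. A t $$ (i, j))"
  shows "is_poly (\<lambda>t. p (A t))"
  using assms(1)
proof induction
  case (const c)
  show ?case by (rule is_poly_const)
next
  case (entry i j)
  then show ?case by (rule assms(2))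
next
  case (add p q)
  from add.IH show ?case by (rule is_poly_add)
next
  case (mult p q)
  from mult.IH show ?case by (rule is_poly_mult)
qed

lemma zariski_closed_poly_curve:
  assumes D: "zariski_closed D" and "\<And>t. A t \<in> carrier_mat 5 5"
    and "\<And>i j. i < 5 \<Longrightarrow> j < 5 \<Longrightarrow> is_poly (\<lambda>t. A t $$ (i, j))"
    and "\<forall>\<^sub>F t in at_top. A t \<in> D"
  shows "A t \<in> D"
proof -
  obtain P where P: "P \<subseteq> poly_fun" "D = {X \<in> carrier_mat 5 5. \<forall>p\<in>P. p X = 0}"
    using D unfolding zariski_closed_def by blast
  have "p (A t) = 0" if "p \<in> P" for p
  proof (rule is_poly_eventually_0_imp_0[where f = "\<lambda>t. p (A t)"])
    show "is_poly (\<lambda>t. p (A t))"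
      using that P(1) by (intro is_poly_poly_fun_along_curve[OF _ assms(3)]) auto
    show "\<forall>\<^sub>F t in at_top. p (A t) = 0"
      using assms(4) by eventually_elim (use that P(2) in auto)
  qed
  then show ?thesis
    using assms(2) P(2) by simp
qed

lemma is_poly_Wmat_index:
  assumes "\<And>j. is_poly (\<lambda>t. a t j)" "\<And>j. is_poly (\<lambda>t. b t j)" "\<And>j. is_poly (\<lambda>t. c t j)"
    and "i < 5" "j < 5"
  shows "is_poly (\<lambda>t. Wmat (a t) (b t) (c t) $$ (i, j))"
  using assms
  by (cases "i = j"; cases "i = cyc_succ j"; cases "i = cyc_succ2 j") (simp_all add: Wmat_def is_poly_const)

lemma zariski_closed_Wmat_curve:
  assumes "zariski_closed D" and "\<forall>\<^sub>F t in at_top. Wmat (a t) (b t) (c t) \<in> D"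
    and "\<And>j. is_poly (\<lambda>t. a t j)" "\<And>j. is_poly (\<lambda>t. b t j)" "\<And>j. is_poly (\<lambda>t. c t j)"
  shows "Wmat (a t) (b t) (c t) \<in> D"
proof (rule zariski_closed_poly_curve[OF assms(1), where A = "\<lambda>t. Wmat (a t) (b t) (c t)"])
  show "is_poly (\<lambda>t. Wmat (a t) (b t) (c t) $$ (i, j))" if "i < 5" "j < 5" for i j
    using that by (rule is_poly_Wmat_index[OF assms(3-5)])
qed (simp_all add: assms(2))

lemma Z_Horn_shape_mem_closed:
  assumes D: "zariski_closed D" "Z_Horn \<subseteq> D"
  shows "Wmat (\<lambda>j. d j * z j) (\<lambda>j. d (cyc_succ j) * (z j + w j)) (\<lambda>j. d (cyc_succ2 j) * w j) \<in> D"
proof -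
  define A B C where "A t j = (d j + t) * (z j + t)"
    and "B t j = (d (cyc_succ j) + t) * ((z j + t) + (w j + t))"
    and "C t j = (d (cyc_succ2 j) + t) * (w j + t)" for t j
  have "\<forall>\<^sub>F t in at_top. 0 < d k + t \<and> 0 < z k + t \<and> 0 < w k + t" for k
    using eventually_gt_at_top[of "- d k"] eventually_gt_at_top[of "- z k"]
      eventually_gt_at_top[of "- w k"]
    by eventually_elim simp
  then have "\<forall>\<^sub>F t in at_top. \<forall>k\<in>{..<5}. 0 < d k + t \<and> 0 < z k + t \<and> 0 < w k + t"
    by (intro eventually_ball_finite) auto
  then have "\<forall>\<^sub>F t in at_top. Wmat (A t) (B t) (C t) \<in> D"
  proof eventually_elim
    case (elim t)
    then have "Wmat (A t) (B t) (C t) \<in> Z_Horn"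
      unfolding A_def B_def C_def by (intro Wmat_mem_Z_Horn) auto
    then show ?case
      using D(2) by blast
  qed
  then have "Wmat (A 0) (B 0) (C 0) \<in> D"
    by (rule zariski_closed_Wmat_curve[OF D(1), where a = A and b = B and c = C])
      (simp_all add: A_def B_def C_def is_poly_intros)
  moreover have "A 0 = (\<lambda>j. d j * z j)" "B 0 = (\<lambda>j. d (cyc_succ j) * (z j + w j))"
    "C 0 = (\<lambda>j. d (cyc_succ2 j) * w j)"
    by (simp_all add: A_def B_def C_def fun_eq_iff)
  ultimately show ?thesis
    by simp
qed

lemma Wmat_mem_if_horn_kernel_nonvanishing:
  assumes D: "zariski_closed D" "Z_Horn \<subseteq> D"
    and ker: "horn_kernel a b c e" and nonzero: "\<forall>k<5. e k \<noteq> 0"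
  shows "Wmat a b c \<in> D"
proof -
  have "Wmat a b c = Wmat (\<lambda>j. 1 / e j * (e j * a j))
    (\<lambda>j. 1 / e (cyc_succ j) * (e j * a j + e (cyc_succ2 j) * c j))
    (\<lambda>j. 1 / e (cyc_succ2 j) * (e (cyc_succ2 j) * c j))"
  proof (rule Wmat_cong)
    fix j :: nat assume "j < 5"
    then have "e j \<noteq> 0" "e (cyc_succ j) \<noteq> 0" "e (cyc_succ2 j) \<noteq> 0"
      using nonzero by simp_all
    moreover have "e j * a j - e (cyc_succ j) * b j + e (cyc_succ2 j) * c j = 0"
      using ker \<open>j < 5\<close> unfolding horn_kernel_def horn_form_def by blast
    ultimately show "a j = 1 / e j * (e j * a j)
      \<and> b j = 1 / e (cyc_succ j) * (e j * a j + e (cyc_succ2 j) * c j)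
      \<and> c j = 1 / e (cyc_succ2 j) * (e (cyc_succ2 j) * c j)"
      by (simp add: field_simps)
  qed
  also have "\<dots> \<in> D"
    by (rule Z_Horn_shape_mem_closed[OF D])
  finally show ?thesis .
qed

lemma horn_kernel_shift:
  assumes ker: "horn_kernel a b c e" and supp: "\<forall>k<5. e k * F k = 0"
    and \<kappa>: "\<forall>j<5. \<kappa> j * ((e j)\<^sup>2 + (e (cyc_succ j))\<^sup>2 + (e (cyc_succ2 j))\<^sup>2) = horn_form a b c F j"
  shows "horn_kernel (\<lambda>j. a j - t * \<kappa> j * e j) (\<lambda>j. b j + t * \<kappa> j * e (cyc_succ j))
    (\<lambda>j. c j - t * \<kappa> j * e (cyc_succ2 j)) (\<lambda>k. e k + t * F k)"
  unfolding horn_kernel_def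
proof (intro allI impI)
  fix j :: nat assume j: "j < 5"
  have "horn_form (\<lambda>j. a j - t * \<kappa> j * e j) (\<lambda>j. b j + t * \<kappa> j * e (cyc_succ j))
      (\<lambda>j. c j - t * \<kappa> j * e (cyc_succ2 j)) (\<lambda>k. e k + t * F k) j
    = horn_form a b c e j + t * horn_form a b c F j
      - t * (\<kappa> j * ((e j)\<^sup>2 + (e (cyc_succ j))\<^sup>2 + (e (cyc_succ2 j))\<^sup>2))
      - t\<^sup>2 * \<kappa> j * (e j * F j + e (cyc_succ j) * F (cyc_succ j) + e (cyc_succ2 j) * F (cyc_succ2 j))"
    unfolding horn_form_def by (simp add: algebra_simps power2_eq_square)
  also have "\<dots> = 0"
  proof -
    have "horn_form a b c e j = 0"
      using ker j unfolding horn_kernel_def by blast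
    moreover have "e j * F j = 0" "e (cyc_succ j) * F (cyc_succ j) = 0"
      "e (cyc_succ2 j) * F (cyc_succ2 j) = 0"
      using supp j cyc_succ_less by blast+
    moreover have "\<kappa> j * ((e j)\<^sup>2 + (e (cyc_succ j))\<^sup>2 + (e (cyc_succ2 j))\<^sup>2) = horn_form a b c F j"
      using \<kappa> j by blast
    ultimately show ?thesis
      by (simp only:) simp
  qed
  finally show "horn_form (\<lambda>j. a j - t * \<kappa> j * e j) (\<lambda>j. b j + t * \<kappa> j * e (cyc_succ j))
      (\<lambda>j. c j - t * \<kappa> j * e (cyc_succ2 j)) (\<lambda>k. e k + t * F k) j = 0" .
qed

lemma exists_zero_before_nonzero:
  assumes "\<exists>k<5. e k \<noteq> 0" "\<exists>k<5. e k = 0"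
  shows "\<exists>j<5. e j = 0 \<and> e (cyc_succ j) \<noteq> 0"
  using assms unfolding ex_less_5 by auto

lemma exists_shift_direction:
  assumes "\<exists>k<5. e k \<noteq> 0" "\<exists>k<5. e k = 0"
  shows "\<exists>F. (\<exists>k<5. F k \<noteq> 0) \<and> (\<forall>k<5. e k * F k = 0) \<and>
    (\<forall>j<5. e j = 0 \<and> e (cyc_succ j) = 0 \<and> e (cyc_succ2 j) = 0 \<longrightarrow> horn_form a b c F j = 0)"
proof -
  \<comment> \<open>Column j of N says F j = 0 if e j \<noteq> 0, is the j-th column equation if e vanishes on
    rows j, j+1, j+2, and is zero otherwise, as for column j0.\<close>
  define N where "N = mat 5 5 (\<lambda>(i, j).
    if e j \<noteq> 0 then (if i = j then 1 else 0)
    else if e (cyc_succ j) = 0 \<and> e (cyc_succ2 j) = 0 then hadamard Horn (Wmat a b c) $$ (i, j)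
    else 0)"
  have N: "N \<in> carrier_mat 5 5"
    by (simp add: N_def)
  obtain j0 where "j0 < 5" "e j0 = 0" "e (cyc_succ j0) \<noteq> 0"
    using exists_zero_before_nonzero[OF assms] by blast
  then have "det N = 0"
    by (intro det_eq_0_if_zero_col[OF N, of j0]) (simp_all add: N_def)
  then obtain F where F: "\<exists>k<5. F k \<noteq> 0" and FN: "\<forall>j<5. (\<Sum>i<5. F i * N $$ (i, j)) = 0"
    unfolding det_eq_0_iff_left_kernel[OF N] by blast
  have "F k = 0" if "k < 5" "e k \<noteq> 0" for k
  proof -
    have "(\<Sum>i<5. F i * N $$ (i, k)) = (\<Sum>i<5. if i = k then F k else 0)"
      using that by (intro sum.cong) (simp_all add: N_def)
    then show ?thesis
      using FN that by simp
  qed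
  moreover have "horn_form a b c F j = 0"
    if "j < 5" "e j = 0" "e (cyc_succ j) = 0" "e (cyc_succ2 j) = 0" for j
  proof -
    have "(\<Sum>i<5. F i * N $$ (i, j)) = (\<Sum>i<5. F i * hadamard Horn (Wmat a b c) $$ (i, j))"
      using that by (intro sum.cong) (simp_all add: N_def)
    then show ?thesis
      using FN that sum_hadamard_Horn_Wmat by simp
  qed
  ultimately show ?thesis
    using F by (metis mult_eq_0_iff)
qed

lemma horn_kernel_deformation:
  assumes ker: "horn_kernel a b c e" and supp: "\<forall>k<5. e k * F k = 0"
    and zero_windows: "\<forall>j<5. e j = 0 \<and> e (cyc_succ j) = 0 \<and> e (cyc_succ2 j) = 0
      \<longrightarrow> horn_form a b c F j = 0"
  obtains a' b' c' where "\<And>t. horn_kernel (a' t) (b' t) (c' t) (\<lambda>k. e k + t * F k)"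
    and "\<And>j. is_poly (\<lambda>t. a' t j)" "\<And>j. is_poly (\<lambda>t. b' t j)" "\<And>j. is_poly (\<lambda>t. c' t j)"
    and "a' 0 = a" "b' 0 = b" "c' 0 = c"
proof -
  \<comment> \<open>Where e vanishes on rows j, j+1, j+2 the denominator is 0, hence so is \<kappa> j, and
    the hypothesis on F makes the j-th equation hold anyway.\<close>
  define \<kappa> where "\<kappa> j = horn_form a b c F j / ((e j)\<^sup>2 + (e (cyc_succ j))\<^sup>2 + (e (cyc_succ2 j))\<^sup>2)"
    for j
  have \<kappa>: "\<forall>j<5. \<kappa> j * ((e j)\<^sup>2 + (e (cyc_succ j))\<^sup>2 + (e (cyc_succ2 j))\<^sup>2) = horn_form a b c F j"
  proof (intro allI impI)
    fix j :: nat assume "j < 5"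
    show "\<kappa> j * ((e j)\<^sup>2 + (e (cyc_succ j))\<^sup>2 + (e (cyc_succ2 j))\<^sup>2) = horn_form a b c F j"
    proof (cases "(e j)\<^sup>2 + (e (cyc_succ j))\<^sup>2 + (e (cyc_succ2 j))\<^sup>2 = 0")
      case True
      then have "e j = 0 \<and> e (cyc_succ j) = 0 \<and> e (cyc_succ2 j) = 0"
        by (simp add: add_nonneg_eq_0_iff sum_power2_ge_zero sum_power2_eq_zero_iff)
      then show ?thesis
        using zero_windows \<open>j < 5\<close> True by simp
    next
      case False
      then show ?thesis
        by (simp add: \<kappa>_def)
    qed
  qed
  show ?thesis
  proof (rule that[of "\<lambda>t j. a j - t * \<kappa> j * e j" "\<lambda>t j. b j + t * \<kappa> j * e (cyc_succ j)"
        "\<lambda>t j. c j - t * \<kappa> j * e (cyc_succ2 j)"])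
    show "horn_kernel (\<lambda>j. a j - t * \<kappa> j * e j) (\<lambda>j. b j + t * \<kappa> j * e (cyc_succ j))
      (\<lambda>j. c j - t * \<kappa> j * e (cyc_succ2 j)) (\<lambda>k. e k + t * F k)" for t
      by (rule horn_kernel_shift[OF ker supp \<kappa>])
  qed (simp_all add: is_poly_intros)
qed

lemma card_zeros_shift_less:
  fixes e F :: "nat \<Rightarrow> real"
  assumes supp: "\<forall>k<n. e k * F k = 0" and "k0 < n" "F k0 \<noteq> 0" and "t \<noteq> 0"
  shows "card {k. k < n \<and> e k + t * F k = 0} < card {k. k < n \<and> e k = 0}"
proof (rule psubset_card_mono)
  have "e k0 = 0"
    using supp[rule_format, OF \<open>k0 < n\<close>] \<open>F k0 \<noteq> 0\<close> by simp
  have "{k. k < n \<and> e k + t * F k = 0} \<subseteq> {k. k < n \<and> e k = 0}"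
    using supp by auto
  moreover have "k0 \<notin> {k. k < n \<and> e k + t * F k = 0}"
    using \<open>e k0 = 0\<close> \<open>F k0 \<noteq> 0\<close> \<open>t \<noteq> 0\<close> by simp
  ultimately show "{k. k < n \<and> e k + t * F k = 0} \<subset> {k. k < n \<and> e k = 0}"
    using \<open>k0 < n\<close> \<open>e k0 = 0\<close> by blast
qed simp

lemma Wmat_mem_if_horn_kernel:
  assumes D: "zariski_closed D" "Z_Horn \<subseteq> D"
  shows "horn_kernel a b c e \<Longrightarrow> \<exists>k<5. e k \<noteq> 0 \<Longrightarrow> Wmat a b c \<in> D"
proof (induction "card {k. k < 5 \<and> e k = 0}" arbitrary: a b c e rule: less_induct)
  case less
  show ?case
  proof (cases "\<forall>k<5. e k \<noteq> 0")
    case True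
    then show ?thesis
      using Wmat_mem_if_horn_kernel_nonvanishing[OF D less.prems(1)] by blast
  next
    case False
    then obtain F where F: "\<exists>k<5. F k \<noteq> 0" and supp: "\<forall>k<5. e k * F k = 0"
      and zero_windows: "\<forall>j<5. e j = 0 \<and> e (cyc_succ j) = 0 \<and> e (cyc_succ2 j) = 0
        \<longrightarrow> horn_form a b c F j = 0"
      using exists_shift_direction[OF less.prems(2)] by blast
    obtain a' b' c' where ker': "\<And>t. horn_kernel (a' t) (b' t) (c' t) (\<lambda>k. e k + t * F k)"
      and poly: "\<And>j. is_poly (\<lambda>t. a' t j)" "\<And>j. is_poly (\<lambda>t. b' t j)" "\<And>j. is_poly (\<lambda>t. c' t j)"
      and init: "a' 0 = a" "b' 0 = b" "c' 0 = c"
      using horn_kernel_deformation[OF less.prems(1) supp zero_windows] by blast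
    obtain k0 where "k0 < 5" "F k0 \<noteq> 0"
      using F by blast
    obtain k1 where "k1 < 5" "e k1 \<noteq> 0"
      using less.prems(2) by blast
    have "\<forall>\<^sub>F t in at_top. Wmat (a' t) (b' t) (c' t) \<in> D"
      using eventually_gt_at_top[of 0]
    proof eventually_elim
      case (elim t)
      then have "t \<noteq> 0"
        by simp
      have "\<exists>k<5. e k + t * F k \<noteq> 0"
        using supp[rule_format, OF \<open>k1 < 5\<close>] \<open>k1 < 5\<close> \<open>e k1 \<noteq> 0\<close> by (intro exI[of _ k1]) simp
      from less.hyps[OF card_zeros_shift_less[OF supp \<open>k0 < 5\<close> \<open>F k0 \<noteq> 0\<close> \<open>t \<noteq> 0\<close>] ker' this]
      show ?case .
    qed
    then have "Wmat (a' 0) (b' 0) (c' 0) \<in> D"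
      by (rule zariski_closed_Wmat_curve[OF D(1) _ poly])
    then show ?thesis
      by (simp add: init)
  qed
qed

theorem theorem2p7:
  shows "zariski_closure Z_Horn = {X \<in> W. det (hadamard Horn X) = 0}"
proof
  show "zariski_closure Z_Horn \<subseteq> {X \<in> W. det (hadamard Horn X) = 0}"
    unfolding zariski_closure_def using zariski_closed_det_locus Z_Horn_subset_det_locus by blast
  show "{X \<in> W. det (hadamard Horn X) = 0} \<subseteq> zariski_closure Z_Horn"
  proof
    fix X assume "X \<in> {X \<in> W. det (hadamard Horn X) = 0}"
    then have "inW X" and det: "det (hadamard Horn X) = 0"
      by (simp_all add: W_def)
    define a b c where "a j = X $$ (j, j)" and "b j = X $$ (cyc_succ j, j)"
      and "c j = X $$ (cyc_succ2 j, j)" for j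
    have X: "X = Wmat a b c"
      unfolding a_def b_def c_def using \<open>inW X\<close> by (rule inW_imp_Wmat)
    then obtain e where "\<exists>k<5. e k \<noteq> 0" "horn_kernel a b c e"
      using det det_hadamard_Horn_Wmat_eq_0_iff by auto
    then show "X \<in> zariski_closure Z_Horn"
      unfolding zariski_closure_def X using Wmat_mem_if_horn_kernel by blast
  qed
qed

end
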